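(* Let $\Lambda\in\mathbb{N}$ and let $\bm{\omega}=\sum_{l=0}^{\Lambda}\sum_{h=-l}^{l}\omega_l^h\bm{\psi}_l^h\in\mathcal{H}_\Lambda$ satisfy $$\sum_{h=-l}^{l}|\omega_l^h|^2=\frac{2l+1}{(\Lambda+1)^2},\qquad l=0,1,\dots,\Lambda.$$ Then on $\mathcal{H}_\Lambda$ the resolution of the identity $$I=\frac{(\Lambda+1)^2}{8\pi^2}\int_{SO(3)}d\mu(g)\,P_g,\qquad P_g:=\bm{\omega}_g\langle\bm{\omega}_g,\cdot\rangle,\qquad \bm{\omega}_g:=\pi_\Lambda(g)\bm{\omega}$$ holds. Moreover, if $\omega_l^h=\omega_l^{-h}$ for all $l,h$, the set $\{\bm{\omega}_g\}_{g\in SO(3)}$ is mapped into itself by the unitary operator $U$ defined by $U\bm{\psi}_l^h=\bm{\psi}_l^{-h}$.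
   Context: $\mathcal{H}_\Lambda$ is a Hilbert space with orthonormal basis $\{\bm{\psi}_l^m\}_{l=0,\dots,\Lambda;\ m=-l,\dots,l}$. Operators: $L_3\bm{\psi}_l^m=m\bm{\psi}_l^m$, $L_\pm\bm{\psi}_l^m=\sqrt{(l\mp m)(l\pm m+1)}\,\bm{\psi}_l^{m\pm1}$, $L_1=(L_++L_-)/2$, $L_2=(L_+-L_-)/(2i)$. $\pi_\Lambda$ is the unitary representation of $SO(3)$ on $\mathcal{H}_\Lambda$ generated by the $L_i$: with Euler angles $(\varphi,\theta,\psi)\in[0,2\pi)\times[0,\pi]\times[0,2\pi)$, $\pi_\Lambda(g)=e^{i\varphi L_3}e^{i\theta L_2}e^{i\psi L_3}$ and $\int_{SO(3)}d\mu(g)=\int_0^{2\pi}d\varphi\int_0^\pi d\theta\sin\theta\int_0^{2\pi}d\psi$. The inner product is antilinear in the first argument. *)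

theory Defs
  imports "HOL-Analysis.Analysis"
begin

text \<open>Vectors of H_Lambda are coefficient functions on index pairs (l,m);
  psi_l^m corresponds to the indicator of (l,m).\<close>

type_synonym vec = "nat \<times> int \<Rightarrow> complex"

definition Idx :: "nat \<Rightarrow> (nat \<times> int) set" where
  "Idx \<Lambda> = {(l, m). l \<le> \<Lambda> \<and> \<bar>m\<bar> \<le> int l}"

definition HS :: "nat \<Rightarrow> vec set" where
  "HS \<Lambda> = {v. \<forall>i. i \<notin> Idx \<Lambda> \<longrightarrow> v i = 0}"

definition psi :: "nat \<Rightarrow> int \<Rightarrow> vec" where
  "psi l m = (\<lambda>i. if i = (l, m) then 1 else 0)"

definition inprod :: "nat \<Rightarrow> vec \<Rightarrow> vec \<Rightarrow> complex" where
  "inprod \<Lambda> a b = (\<Sum>i\<in>Idx \<Lambda>. cnj (a i) * b i)"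

definition L3 :: "nat \<Rightarrow> vec \<Rightarrow> vec" where
  "L3 \<Lambda> v = (\<lambda>(l, m). if (l, m) \<in> Idx \<Lambda> then of_int m * v (l, m) else 0)"

text \<open>L_+ psi_l^m = sqrt((l-m)(l+m+1)) psi_l^(m+1), so the (l,m) coefficient of L_+ v
  comes from v(l,m-1) with factor sqrt((l-m+1)(l+m)).\<close>
definition Lplus :: "nat \<Rightarrow> vec \<Rightarrow> vec" where
  "Lplus \<Lambda> v = (\<lambda>(l, m). if (l, m) \<in> Idx \<Lambda>
     then complex_of_real (sqrt (of_int ((int l - (m - 1)) * (int l + (m - 1) + 1)))) * v (l, m - 1)
     else 0)"

text \<open>L_- psi_l^m = sqrt((l+m)(l-m+1)) psi_l^(m-1).\<close>
definition Lminus :: "nat \<Rightarrow> vec \<Rightarrow> vec" where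
  "Lminus \<Lambda> v = (\<lambda>(l, m). if (l, m) \<in> Idx \<Lambda>
     then complex_of_real (sqrt (of_int ((int l + (m + 1)) * (int l - (m + 1) + 1)))) * v (l, m + 1)
     else 0)"

definition L1 :: "nat \<Rightarrow> vec \<Rightarrow> vec" where
  "L1 \<Lambda> v = (\<lambda>i. (Lplus \<Lambda> v i + Lminus \<Lambda> v i) / 2)"

definition L2 :: "nat \<Rightarrow> vec \<Rightarrow> vec" where
  "L2 \<Lambda> v = (\<lambda>i. (Lplus \<Lambda> v i - Lminus \<Lambda> v i) / (2 * \<i>))"

definition op_exp :: "(vec \<Rightarrow> vec) \<Rightarrow> vec \<Rightarrow> vec" where
  "op_exp A v = (\<lambda>i. \<Sum>k. (A ^^ k) v i / of_nat (fact k))"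

definition scaleop :: "complex \<Rightarrow> (vec \<Rightarrow> vec) \<Rightarrow> vec \<Rightarrow> vec" where
  "scaleop c A v = (\<lambda>i. c * A v i)"

text \<open>pi_Lambda(g) = e^{i phi L3} e^{i theta L2} e^{i psi L3}, g given by Euler angles.\<close>
definition repr :: "nat \<Rightarrow> real \<Rightarrow> real \<Rightarrow> real \<Rightarrow> vec \<Rightarrow> vec" where
  "repr \<Lambda> \<phi> \<theta> \<psi> v =
     op_exp (scaleop (\<i> * of_real \<phi>) (L3 \<Lambda>))
       (op_exp (scaleop (\<i> * of_real \<theta>) (L2 \<Lambda>))
         (op_exp (scaleop (\<i> * of_real \<psi>) (L3 \<Lambda>)) v))"

definition euler_angles :: "(real \<times> real \<times> real) set" where
  "euler_angles = {0..<2*pi} \<times> {0..pi} \<times> {0..<2*pi}"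

definition Uop :: "vec \<Rightarrow> vec" where
  "Uop v = (\<lambda>(l, m). v (l, - m))"

end

theory Submission
  imports Defs
begin

text \<open>In coordinates, the (l, m) coefficient of \<omega>_g is
  exp(i m \<phi>) \<Sum>_h exp(i h \<psi>) \<omega>_l^h d^l_mh(\<theta>), where d^l is the matrix of exp(i \<theta> L2) on the
  block of weight l. The resolution of the identity amounts to the Schur orthogonality relations
  for these matrix coefficients: the \<phi>- and \<psi>-integrals force m = m' and h = h', and what
  remains is \<integral>_0^\<pi> sin \<theta> d^l_mh d^l'_mh d\<theta> = 2 \<delta>_ll' / (2l + 1), which together with the
  normalisation of \<omega> produces exactly the factor (\<Lambda> + 1)^2 / (8 \<pi>^2).

  No closed formula for d^l is needed. Its columns solve a linear system x' = A x with A real,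
  antisymmetric and tridiagonal, so \<Sum>_h x_h^2 is conserved and solutions are determined by
  their initial values. This yields the three-term recurrence
  sin \<theta> (c_h d_m,h+1 + c_h-1 d_m,h-1) = 2 (m - h cos \<theta>) d_mh. Integrating by parts with it,
  the weighted integral above is independent of h when l = l' and vanishes when l \<noteq> l', and
  summing over h with \<Sum>_h (d^l_mh)^2 = 1 fixes its value.

  For the second claim, d^l_-m,-h = (-1)^(m-h) d^l_mh shows that U \<omega>_g = \<omega>_g' for
  g' = (\<pi> - \<phi>, \<theta>, \<pi> - \<psi>), angles taken modulo 2\<pi>.\<close>

definition coeff_linear :: "(vec \<Rightarrow> vec) \<Rightarrow> bool" where
  "coeff_linear A \<longleftrightarrow>
     (\<forall>a b v w. A (\<lambda>i. a * v i + b * w i) = (\<lambda>i. a * A v i + b * A w i))"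

lemma coeff_linearD:
  "coeff_linear A \<Longrightarrow> A (\<lambda>i. a * v i + b * w i) = (\<lambda>i. a * A v i + b * A w i)"
  unfolding coeff_linear_def by blast

lemma coeff_linear_zero: "coeff_linear A \<Longrightarrow> A (\<lambda>i. 0) = (\<lambda>i. 0)"
  using coeff_linearD[of A 0 "\<lambda>i. 0" 0 "\<lambda>i. 0"] by simp

lemma coeff_linear_scale: "coeff_linear A \<Longrightarrow> A (\<lambda>i. a * v i) = (\<lambda>i. a * A v i)"
  using coeff_linearD[of A a v 0 v] by simp

lemma coeff_linear_funpow: "coeff_linear A \<Longrightarrow> coeff_linear (A ^^ k)"
  by (induction k) (auto simp: coeff_linear_def)

lemma coeff_linear_sum:
  assumes "coeff_linear A" "finite S"
  shows "A (\<lambda>i. \<Sum>j\<in>S. c j * u j i) = (\<lambda>i. \<Sum>j\<in>S. c j * A (u j) i)"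
  using assms(2)
proof (induction S rule: finite_induct)
  case empty
  then show ?case using coeff_linear_zero[OF assms(1)] by simp
next
  case (insert x F)
  have "A (\<lambda>i. \<Sum>j\<in>insert x F. c j * u j i) = A (\<lambda>i. c x * u x i + 1 * (\<Sum>j\<in>F. c j * u j i))"
    using insert by simp
  also have "\<dots> = (\<lambda>i. c x * A (u x) i + 1 * A (\<lambda>i. \<Sum>j\<in>F. c j * u j i) i)"
    by (rule coeff_linearD[OF assms(1)])
  finally show ?case using insert by simp
qed

lemma funpow_scaleop:
  assumes "coeff_linear A"
  shows "(scaleop c A ^^ k) v = (\<lambda>i. c ^ k * (A ^^ k) v i)"
proof (induction k)
  case (Suc k)
  then show ?case
    using coeff_linear_scale[OF assms, of "c ^ k"] by (simp add: scaleop_def mult.assoc)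
qed simp

text \<open>L_+ \<psi>_l^h = ladder l h \<psi>_l^(h+1) and L_- \<psi>_l^h = ladder l (h - 1) \<psi>_l^(h-1).\<close>

definition ladder :: "nat \<Rightarrow> int \<Rightarrow> real" where
  "ladder l h = sqrt (of_int ((int l - h) * (int l + h + 1)))"

lemma ladder_top [simp]: "ladder l (int l) = 0"
  and ladder_bottom [simp]: "ladder l (- int l - 1) = 0"
  by (simp_all add: ladder_def)

lemma ladder_minus: "ladder l (- h) = ladder l (h - 1)"
  unfolding ladder_def by (simp add: algebra_simps)

lemma ladder_pos: "h \<in> {- int l..int l - 1} \<Longrightarrow> 0 < ladder l h"
  unfolding ladder_def by simp

lemma ladder_nonneg: "h \<in> {- int l - 1..int l} \<Longrightarrow> 0 \<le> ladder l h"
  unfolding ladder_def by simp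

lemma ladder_le: "ladder l h \<le> real l + 1"
  unfolding ladder_def
proof (rule real_le_lsqrt)
  have "0 \<le> h * (h + 1)"
    by (cases "0 \<le> h") (auto intro: mult_nonneg_nonneg mult_nonpos_nonpos)
  then have "(int l - h) * (int l + h + 1) \<le> (int l + 1)\<^sup>2"
    by (simp add: power2_eq_square algebra_simps)
  then have "real_of_int ((int l - h) * (int l + h + 1)) \<le> real_of_int ((int l + 1)\<^sup>2)"
    by (simp only: of_int_le_iff)
  then show "real_of_int ((int l - h) * (int l + h + 1)) \<le> (real l + 1)\<^sup>2"
    by simp
qed simp

lemma ladder_square_diff:
  assumes "h \<in> {- int l..int l}"
  shows "(ladder l h)\<^sup>2 - (ladder l (h - 1))\<^sup>2 = - 2 * of_int h"
proof -
  have sq: "(ladder l k)\<^sup>2 = of_int ((int l - k) * (int l + k + 1))" if "k \<in> {- int l - 1..int l}" for k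
    unfolding ladder_def using that by (intro real_sqrt_pow2) simp
  show ?thesis
    using sq[of h] sq[of "h - 1"] assms by (simp add: algebra_simps)
qed

definition iL2 :: "nat \<Rightarrow> vec \<Rightarrow> vec" where
  "iL2 \<Lambda> v = (\<lambda>i. (Lplus \<Lambda> v i - Lminus \<Lambda> v i) / 2)"

lemma scaleop_L2: "scaleop (\<i> * of_real t) (L2 \<Lambda>) = scaleop (of_real t) (iL2 \<Lambda>)"
  unfolding scaleop_def L2_def iL2_def by (auto simp: fun_eq_iff field_simps)

lemma coeff_linear_iL2: "coeff_linear (iL2 \<Lambda>)"
  unfolding coeff_linear_def iL2_def Lplus_def Lminus_def by (auto simp: fun_eq_iff field_simps)

lemma iL2_apply:
  "iL2 \<Lambda> v (l, m) = (if (l, m) \<in> Idx \<Lambda>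
     then (of_real (ladder l (m - 1)) * v (l, m - 1) - of_real (ladder l m) * v (l, m + 1)) / 2
     else 0)"
proof -
  have "(int l + (m + 1)) * (int l - (m + 1) + 1) = (int l - m) * (int l + m + 1)"
    by (simp add: algebra_simps)
  then show ?thesis unfolding iL2_def Lplus_def Lminus_def ladder_def by simp
qed

lemma iL2_outside: "i \<notin> Idx \<Lambda> \<Longrightarrow> iL2 \<Lambda> v i = 0"
  by (cases i) (simp add: iL2_apply)

lemma norm_iL2_le:
  assumes "\<forall>i. norm (v i) \<le> M"
  shows "norm (iL2 \<Lambda> v i) \<le> (real \<Lambda> + 1) * M"
proof -
  obtain l m where i: "i = (l, m)" by (cases i)
  have M: "0 \<le> M" using assms norm_ge_zero order_trans by blast
  show ?thesis
  proof (cases "(l, m) \<in> Idx \<Lambda>")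
    case True
    then have lm: "real l \<le> real \<Lambda>" "0 \<le> ladder l (m - 1)" "0 \<le> ladder l m"
      by (auto simp: Idx_def intro!: ladder_nonneg)
    have "norm (of_real (ladder l (m - 1)) * v (l, m - 1) - of_real (ladder l m) * v (l, m + 1))
        \<le> ladder l (m - 1) * norm (v (l, m - 1)) + ladder l m * norm (v (l, m + 1))"
      by (rule order_trans[OF norm_triangle_ineq4]) (simp add: norm_mult lm)
    also have "\<dots> \<le> (real \<Lambda> + 1) * M + (real \<Lambda> + 1) * M"
      using ladder_le[of l "m - 1"] ladder_le[of l m] lm assms M by (intro add_mono mult_mono) auto
    finally show ?thesis using True by (simp add: i iL2_apply norm_divide mult_ac)
  qed (simp add: i iL2_apply M)
qed

lemma norm_iL2_funpow_le:
  assumes "\<forall>i. norm (v i) \<le> M"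
  shows "norm ((iL2 \<Lambda> ^^ k) v i) \<le> (real \<Lambda> + 1) ^ k * M"
proof (induction k arbitrary: i)
  case 0
  then show ?case by (simp add: assms[rule_format])
next
  case (Suc k)
  have "norm (iL2 \<Lambda> ((iL2 \<Lambda> ^^ k) v) i) \<le> (real \<Lambda> + 1) * ((real \<Lambda> + 1) ^ k * M)"
    using Suc by (intro norm_iL2_le) auto
  then show ?case by (simp add: mult.assoc)
qed

lemma iL2_eq_0:
  assumes "\<And>i. i \<in> Idx \<Lambda> \<Longrightarrow> v i = 0"
  shows "iL2 \<Lambda> v = (\<lambda>i. 0)"
proof (intro ext, clarify)
  fix l m
  show "iL2 \<Lambda> v (l, m) = 0"
  proof (cases "(l, m) \<in> Idx \<Lambda>")
    case True
    have "m = - int l \<or> (l, m - 1) \<in> Idx \<Lambda>"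
      using True by (auto simp: Idx_def)
    then have "of_real (ladder l (m - 1)) * v (l, m - 1) = 0"
      by (elim disjE) (simp_all add: assms)
    moreover have "m = int l \<or> (l, m + 1) \<in> Idx \<Lambda>"
      using True by (auto simp: Idx_def)
    then have "of_real (ladder l m) * v (l, m + 1) = 0"
      by (elim disjE) (simp_all add: assms)
    ultimately show ?thesis using True by (auto simp: iL2_apply)
  qed (simp add: iL2_apply)
qed

lemma iL2_psi:
  assumes "(l, h) \<in> Idx \<Lambda>"
  shows "iL2 \<Lambda> (psi l h) = (\<lambda>i. of_real (ladder l h / 2) * psi l (h + 1) i
                                 + of_real (- ladder l (h - 1) / 2) * psi l (h - 1) i)"
proof (intro ext, clarify)
  fix l' m'
  show "iL2 \<Lambda> (psi l h) (l', m') = of_real (ladder l h / 2) * psi l (h + 1) (l', m')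
          + of_real (- ladder l (h - 1) / 2) * psi l (h - 1) (l', m')"
  proof (cases "(l', m') \<in> Idx \<Lambda>")
    case True
    consider "l' = l" "m' = h + 1" | "l' = l" "m' = h - 1" | "(l', m' - 1) \<noteq> (l, h)" "(l', m' + 1) \<noteq> (l, h)"
      by fastforce
    then show ?thesis
      using True by cases (simp_all add: iL2_apply psi_def)
  next
    case False
    have "of_real (ladder l h / 2) * psi l (h + 1) (l', m') = 0"
    proof (cases "(l', m') = (l, h + 1)")
      case True
      then have "h = int l" using False assms by (auto simp: Idx_def)
      then show ?thesis by simp
    qed (auto simp: psi_def)
    moreover have "of_real (- ladder l (h - 1) / 2) * psi l (h - 1) (l', m') = 0"
    proof (cases "(l', m') = (l, h - 1)")
      case True
      then have "h = - int l" using False assms by (auto simp: Idx_def)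
      then show ?thesis by simp
    qed (auto simp: psi_def)
    ultimately show ?thesis using False by (auto simp: iL2_apply)
  qed
qed

definition real_valued :: "vec \<Rightarrow> bool" where
  "real_valued v \<longleftrightarrow> (\<forall>i. Im (v i) = 0)"

lemma real_valued_iL2_funpow: "real_valued v \<Longrightarrow> real_valued ((iL2 \<Lambda> ^^ k) v)"
  by (induction k) (auto simp: real_valued_def split_paired_All iL2_apply)

definition in_block :: "nat \<Rightarrow> vec \<Rightarrow> bool" where
  "in_block l v \<longleftrightarrow> (\<forall>l' m. l' \<noteq> l \<longrightarrow> v (l', m) = 0)"

lemma in_block_iL2_funpow: "in_block l v \<Longrightarrow> in_block l ((iL2 \<Lambda> ^^ k) v)"
  by (induction k) (auto simp: in_block_def iL2_apply)

definition exp_iL2 :: "nat \<Rightarrow> real \<Rightarrow> vec \<Rightarrow> vec" where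
  "exp_iL2 \<Lambda> t = op_exp (scaleop (\<i> * of_real t) (L2 \<Lambda>))"

lemma exp_iL2_apply:
  "exp_iL2 \<Lambda> t v i = (\<Sum>k. of_real t ^ k * (iL2 \<Lambda> ^^ k) v i / of_nat (fact k))"
  unfolding exp_iL2_def op_exp_def scaleop_L2 funpow_scaleop[OF coeff_linear_iL2] by simp

lemma summable_iL2_series:
  assumes "\<forall>i. norm (v i) \<le> M"
  shows "summable (\<lambda>k. norm ((iL2 \<Lambda> ^^ k) v i) / fact k * \<bar>t\<bar> ^ k)"
proof (rule summable_comparison_test')
  show "summable (\<lambda>k. M * (inverse (fact k) * ((real \<Lambda> + 1) * \<bar>t\<bar>) ^ k))"
    by (intro summable_mult summable_exp)
  fix k :: nat
  have "norm ((iL2 \<Lambda> ^^ k) v i) / fact k * \<bar>t\<bar> ^ k \<le> (real \<Lambda> + 1) ^ k * M / fact k * \<bar>t\<bar> ^ k"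
    by (intro mult_right_mono divide_right_mono norm_iL2_funpow_le[OF assms]) auto
  also have "\<dots> = M * (inverse (fact k) * ((real \<Lambda> + 1) * \<bar>t\<bar>) ^ k)"
    by (simp add: power_mult_distrib divide_inverse mult_ac)
  finally show "norm (norm ((iL2 \<Lambda> ^^ k) v i) / fact k * \<bar>t\<bar> ^ k)
      \<le> M * (inverse (fact k) * ((real \<Lambda> + 1) * \<bar>t\<bar>) ^ k)"
    by simp
qed

lemma summable_exp_iL2:
  assumes "\<forall>i. norm (v i) \<le> M"
  shows "summable (\<lambda>k. of_real t ^ k * (iL2 \<Lambda> ^^ k) v i / of_nat (fact k))"
  by (rule summable_comparison_test'[OF summable_iL2_series[OF assms, where \<Lambda> = \<Lambda> and i = i and t = t]])
     (simp add: norm_mult norm_divide norm_power mult_ac)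

lemma exp_iL2_sum:
  assumes "finite S" and "\<And>j. j \<in> S \<Longrightarrow> \<forall>i. norm (u j i) \<le> M"
  shows "exp_iL2 \<Lambda> t (\<lambda>i. \<Sum>j\<in>S. c j * u j i) i = (\<Sum>j\<in>S. c j * exp_iL2 \<Lambda> t (u j) i)"
proof -
  have "exp_iL2 \<Lambda> t (\<lambda>i. \<Sum>j\<in>S. c j * u j i) i
      = (\<Sum>k. \<Sum>j\<in>S. c j * (of_real t ^ k * (iL2 \<Lambda> ^^ k) (u j) i / of_nat (fact k)))"
    unfolding exp_iL2_apply coeff_linear_sum[OF coeff_linear_funpow[OF coeff_linear_iL2] assms(1)]
    by (simp add: sum_distrib_left sum_divide_distrib mult_ac)
  also have "\<dots> = (\<Sum>j\<in>S. \<Sum>k. c j * (of_real t ^ k * (iL2 \<Lambda> ^^ k) (u j) i / of_nat (fact k)))"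
    using assms by (intro suminf_sum summable_mult summable_exp_iL2) auto
  also have "\<dots> = (\<Sum>j\<in>S. c j * exp_iL2 \<Lambda> t (u j) i)"
    unfolding exp_iL2_apply using assms by (intro sum.cong refl suminf_mult summable_exp_iL2) auto
  finally show ?thesis .
qed

lemma exp_iL2_outside:
  assumes "i \<notin> Idx \<Lambda>"
  shows "exp_iL2 \<Lambda> t v i = v i"
proof -
  have "of_real t ^ k * (iL2 \<Lambda> ^^ k) v i / of_nat (fact k) = (if k = 0 then v i else 0)" for k
    using assms by (cases k) (simp_all add: iL2_outside)
  then show ?thesis
    unfolding exp_iL2_apply using sums_single[of 0 "\<lambda>_. v i"] by (simp add: sums_iff)
qed

text \<open>\<open>iL2\<close> is a real matrix, so for real \<open>v\<close> the coefficients of \<open>exp_iL2 \<Lambda> t v\<close> are the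
  real power series below, and the differential equations can be handled over the reals.\<close>

definition exp_iL2_re :: "nat \<Rightarrow> vec \<Rightarrow> nat \<times> int \<Rightarrow> real \<Rightarrow> real" where
  "exp_iL2_re \<Lambda> v i t = (\<Sum>k. Re ((iL2 \<Lambda> ^^ k) v i) / fact k * t ^ k)"

lemma summable_exp_iL2_re:
  assumes "\<forall>i. norm (v i) \<le> M"
  shows "summable (\<lambda>k. Re ((iL2 \<Lambda> ^^ k) v i) / fact k * t ^ k)"
  by (rule summable_comparison_test'[OF summable_iL2_series[OF assms, where \<Lambda> = \<Lambda> and i = i and t = t]])
     (simp add: abs_mult power_abs abs_Re_le_cmod divide_right_mono mult_right_mono)

lemma exp_iL2_eq_of_real:
  assumes "\<forall>i. norm (v i) \<le> M" and "real_valued v"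
  shows "exp_iL2 \<Lambda> t v i = of_real (exp_iL2_re \<Lambda> v i t)"
proof -
  have series_term: "of_real t ^ k * (iL2 \<Lambda> ^^ k) v i / of_nat (fact k)
      = of_real (Re ((iL2 \<Lambda> ^^ k) v i) / fact k * t ^ k)" for k
  proof -
    have "Im ((iL2 \<Lambda> ^^ k) v i) = 0"
      using real_valued_iL2_funpow[OF assms(2)] unfolding real_valued_def by blast
    then have "(iL2 \<Lambda> ^^ k) v i = of_real (Re ((iL2 \<Lambda> ^^ k) v i))"
      by (simp add: complex_eq_iff)
    then show ?thesis by (metis of_real_divide of_real_mult of_real_power of_real_of_nat_eq
          of_nat_fact mult.commute times_divide_eq_left)
  qed
  show ?thesis
    unfolding exp_iL2_apply series_term exp_iL2_re_def
    by (rule suminf_of_real[symmetric]) (rule summable_exp_iL2_re[OF assms(1)])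
qed

lemma exp_iL2_re_has_derivative:
  assumes "\<forall>i. norm (v i) \<le> M"
  shows "((\<lambda>t. exp_iL2_re \<Lambda> v i t) has_real_derivative exp_iL2_re \<Lambda> (iL2 \<Lambda> v) i t) (at t)"
proof -
  have d: "diffs (\<lambda>k. Re ((iL2 \<Lambda> ^^ k) v i) / fact k) = (\<lambda>k. Re ((iL2 \<Lambda> ^^ k) (iL2 \<Lambda> v) i) / fact k)"
    by (simp add: fun_eq_iff diffs_def funpow_Suc_right field_simps del: funpow.simps of_nat_Suc)
  have "((\<lambda>x. \<Sum>k. Re ((iL2 \<Lambda> ^^ k) v i) / fact k * x ^ k) has_field_derivative
          (\<Sum>k. diffs (\<lambda>k. Re ((iL2 \<Lambda> ^^ k) v i) / fact k) k * t ^ k)) (at t)"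
    by (rule termdiffs_strong_converges_everywhere) (rule summable_exp_iL2_re[OF assms])
  then show ?thesis unfolding d exp_iL2_re_def by simp
qed

lemma exp_iL2_re_combination:
  assumes "\<forall>i. norm (u i) \<le> M" and "\<forall>i. norm (w i) \<le> N"
  shows "exp_iL2_re \<Lambda> (\<lambda>i. of_real a * u i + of_real b * w i) j t
       = a * exp_iL2_re \<Lambda> u j t + b * exp_iL2_re \<Lambda> w j t"
proof -
  have "exp_iL2_re \<Lambda> (\<lambda>i. of_real a * u i + of_real b * w i) j t
      = (\<Sum>k. a * (Re ((iL2 \<Lambda> ^^ k) u j) / fact k * t ^ k) + b * (Re ((iL2 \<Lambda> ^^ k) w j) / fact k * t ^ k))"
    unfolding exp_iL2_re_def coeff_linearD[OF coeff_linear_funpow[OF coeff_linear_iL2]]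
    by (simp add: algebra_simps add_divide_distrib)
  also have "\<dots> = (\<Sum>k. a * (Re ((iL2 \<Lambda> ^^ k) u j) / fact k * t ^ k))
                   + (\<Sum>k. b * (Re ((iL2 \<Lambda> ^^ k) w j) / fact k * t ^ k))"
    by (intro suminf_add[symmetric] summable_mult summable_exp_iL2_re[OF assms(1)] summable_exp_iL2_re[OF assms(2)])
  also have "\<dots> = a * exp_iL2_re \<Lambda> u j t + b * exp_iL2_re \<Lambda> w j t"
    unfolding exp_iL2_re_def
    by (simp only: suminf_mult[OF summable_exp_iL2_re[OF assms(1)]] suminf_mult[OF summable_exp_iL2_re[OF assms(2)]])
  finally show ?thesis .
qed

text \<open>On the block spanned by the \<psi>_l^h, \<open>iL2\<close> is the real antisymmetric tridiagonal matrix with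
  entries \<plusminus>ladder l h / 2; each column of its exponential solves the following system.\<close>

definition ladder_ode :: "(int \<Rightarrow> real) \<Rightarrow> int set \<Rightarrow> (int \<Rightarrow> real \<Rightarrow> real) \<Rightarrow> bool" where
  "ladder_ode c H x \<longleftrightarrow>
     (\<forall>h\<in>H. \<forall>t. (x h has_real_derivative (c h * x (h + 1) t - c (h - 1) * x (h - 1) t) / 2) (at t))"

lemma ladder_odeD:
  "ladder_ode c H x \<Longrightarrow> h \<in> H \<Longrightarrow>
     (x h has_real_derivative (c h * x (h + 1) t - c (h - 1) * x (h - 1) t) / 2) (at t)"
  unfolding ladder_ode_def by blast

lemma ladder_ode_subset: "ladder_ode c H x \<Longrightarrow> H' \<subseteq> H \<Longrightarrow> ladder_ode c H' x"
  unfolding ladder_ode_def by blast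

lemma ladder_ode_continuous: "ladder_ode c UNIV x \<Longrightarrow> continuous_on S (x h)"
  by (meson DERIV_isCont UNIV_I continuous_at_imp_continuous_on ladder_odeD)

lemma sum_int_telescope:
  fixes f :: "int \<Rightarrow> 'a::ab_group_add"
  assumes "a \<le> b + 1"
  shows "(\<Sum>h\<in>{a..b}. f h - f (h - 1)) = f b - f (a - 1)"
proof -
  have "a - 1 \<le> b" using assms by simp
  then show ?thesis
  proof (induction b rule: int_ge_induct)
    case (step i)
    have "{a..i + 1} = insert (i + 1) {a..i}"
      using step(1) by (auto simp: atLeastAtMostPlus1_int_conv)
    then show ?case using step by (simp add: algebra_simps)
  qed simp
qed

lemma ladder_ode_energy_const:
  assumes ode: "ladder_ode c {-L..L} x" and "c L = 0" "c (- L - 1) = 0"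
  shows "(\<Sum>h\<in>{-L..L}. (x h t)\<^sup>2) = (\<Sum>h\<in>{-L..L}. (x h s)\<^sup>2)"
proof (cases "- L \<le> L + 1")
  case True
  have "((\<lambda>t. \<Sum>h\<in>{-L..L}. (x h t)\<^sup>2) has_real_derivative 0) (at t)" for t
  proof -
    have "((\<lambda>t. \<Sum>h\<in>{-L..L}. (x h t)\<^sup>2) has_real_derivative
           (\<Sum>h\<in>{-L..L}. 2 * x h t * ((c h * x (h + 1) t - c (h - 1) * x (h - 1) t) / 2))) (at t)"
      by (intro DERIV_sum) (auto intro!: derivative_eq_intros ladder_odeD[OF ode])
    also have "(\<Sum>h\<in>{-L..L}. 2 * x h t * ((c h * x (h + 1) t - c (h - 1) * x (h - 1) t) / 2))
        = (\<Sum>h\<in>{-L..L}. c h * x h t * x (h + 1) t - c (h - 1) * x (h - 1) t * x (h - 1 + 1) t)"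
      by (intro sum.cong) (auto simp: field_simps)
    also have "\<dots> = 0"
      using sum_int_telescope[of "- L" L "\<lambda>h. c h * x h t * x (h + 1) t"] True assms by simp
    finally show ?thesis .
  qed
  then show ?thesis by (intro DERIV_isconst_all) blast
qed simp

lemma ladder_ode_eq_0:
  assumes "ladder_ode c {-L..L} x" and "c L = 0" "c (- L - 1) = 0"
    and "\<forall>h\<in>{-L..L}. x h 0 = 0" and "h \<in> {-L..L}"
  shows "x h t = 0"
proof -
  have "(\<Sum>h\<in>{-L..L}. (x h t)\<^sup>2) = (\<Sum>h\<in>{-L..L}. (x h 0)\<^sup>2)"
    using assms(1-3) by (rule ladder_ode_energy_const)
  also have "\<dots> = 0" using assms(4) by simp
  finally show ?thesis using assms(5) by (simp add: sum_nonneg_eq_0_iff)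
qed

definition ladder_recurrence :: "nat \<Rightarrow> int \<Rightarrow> (int \<Rightarrow> real \<Rightarrow> real) \<Rightarrow> bool" where
  "ladder_recurrence l m x \<longleftrightarrow> (\<forall>h\<in>{- int l..int l}. \<forall>t.
     sin t * (ladder l h * x (h + 1) t + ladder l (h - 1) * x (h - 1) t)
       = 2 * (of_int m - of_int h * cos t) * x h t)"

text \<open>The defect of the recurrence solves the same system, with zero initial values.\<close>

lemma ladder_ode_recurrence:
  assumes ode: "ladder_ode (ladder l) UNIV x"
    and init: "\<forall>h\<in>{- int l..int l}. x h 0 = (if h = m then 1 else 0)"
  shows "ladder_recurrence l m x"
  unfolding ladder_recurrence_def
proof (intro ballI allI)
  fix h t assume h: "h \<in> {- int l..int l}"
  define k where "k h t = 2 * (of_int m - of_int h * cos t) * x h t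
    - sin t * (ladder l h * x (h + 1) t + ladder l (h - 1) * x (h - 1) t)" for h t
  have k_ode: "ladder_ode (ladder l) {- int l..int l} k"
    unfolding ladder_ode_def
  proof (intro ballI allI)
    fix h t assume h: "h \<in> {- int l..int l}"
    let ?c = "ladder l" and ?dx = "\<lambda>h. (ladder l h * x (h + 1) t - ladder l (h - 1) * x (h - 1) t) / 2"
    have d: "(k h has_real_derivative
       2 * (of_int h * sin t) * x h t + 2 * (of_int m - of_int h * cos t) * ?dx h
       - (cos t * (?c h * x (h + 1) t + ?c (h - 1) * x (h - 1) t)
          + sin t * (?c h * ?dx (h + 1) + ?c (h - 1) * ?dx (h - 1)))) (at t)"
      unfolding k_def by (auto intro!: derivative_eq_intros ladder_odeD[OF ode] simp: field_simps)
    have e: "2 * (of_int h * sin t) * x h t + 2 * (of_int m - of_int h * cos t) * ?dx h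
       - (cos t * (?c h * x (h + 1) t + ?c (h - 1) * x (h - 1) t)
          + sin t * (?c h * ?dx (h + 1) + ?c (h - 1) * ?dx (h - 1)))
       = (?c h * k (h + 1) t - ?c (h - 1) * k (h - 1) t) / 2
         + sin t * x h t * ((?c h)\<^sup>2 - (?c (h - 1))\<^sup>2 + 2 * of_int h)"
      unfolding k_def by (simp add: field_simps power2_eq_square)
    have z: "(?c h)\<^sup>2 - (?c (h - 1))\<^sup>2 + 2 * of_int h = 0"
      using ladder_square_diff[OF h] by simp
    show "(k h has_real_derivative (?c h * k (h + 1) t - ?c (h - 1) * k (h - 1) t) / 2) (at t)"
      using d unfolding e z mult_zero_right add_0_right .
  qed
  have "\<forall>h\<in>{- int l..int l}. k h 0 = 0"
    using init by (simp add: k_def)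
  then have "k h t = 0"
    using h by (intro ladder_ode_eq_0[OF k_ode]) simp_all
  then show "sin t * (ladder l h * x (h + 1) t + ladder l (h - 1) * x (h - 1) t)
       = 2 * (of_int m - of_int h * cos t) * x h t"
    by (simp add: k_def)
qed

lemma ladder_ode_unit_energy:
  assumes ode: "ladder_ode (ladder l) UNIV x"
    and init: "\<forall>h\<in>{- int l..int l}. x h 0 = (if h = m then 1 else 0)"
    and m: "m \<in> {- int l..int l}"
  shows "(\<Sum>h\<in>{- int l..int l}. (x h t)\<^sup>2) = 1"
proof -
  have "(\<Sum>h\<in>{- int l..int l}. (x h t)\<^sup>2) = (\<Sum>h\<in>{- int l..int l}. (x h 0)\<^sup>2)"
    by (rule ladder_ode_energy_const[OF ladder_ode_subset[OF ode]]) simp_all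
  also have "\<dots> = (\<Sum>h\<in>{- int l..int l}. if h = m then 1 else 0)"
    using init by (intro sum.cong) auto
  also have "\<dots> = 1"
    using m by simp
  finally show ?thesis .
qed

definition sin_inner :: "(int \<Rightarrow> real \<Rightarrow> real) \<Rightarrow> (int \<Rightarrow> real \<Rightarrow> real) \<Rightarrow> int \<Rightarrow> real" where
  "sin_inner p q h = integral {0..pi} (\<lambda>t. sin t * p h t * q h t)"

lemma integral_sin_0_pi: "integral {0..pi} sin = 2"
proof -
  have "(sin has_integral (- cos pi) - (- cos 0)) {0..pi}"
    by (intro fundamental_theorem_of_calculus)
       (auto intro!: derivative_eq_intros simp: has_real_derivative_iff_has_vector_derivative[symmetric])
  then show ?thesis by (simp add: integral_unique)
qed

text \<open>The integrand is the derivative of \<open>sin t * p h t * q (h + 1) t\<close>, which vanishes at \<open>0\<close> and \<open>pi\<close>.\<close>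

lemma has_integral_ladder_shift:
  assumes p: "ladder_ode (ladder l) UNIV p" "ladder_recurrence l m p"
    and q: "ladder_ode (ladder l') UNIV q" "ladder_recurrence l' m q"
    and h: "h \<in> {- int l..int l}" "h + 1 \<in> {- int l'..int l'}"
  shows "((\<lambda>t. sin t * (ladder l h * p (h + 1) t * q (h + 1) t - ladder l' h * p h t * q h t))
           has_integral 0) {0..pi}"
proof -
  let ?c = "ladder l" and ?c' = "ladder l'"
  define F where "F t = sin t * p h t * q (h + 1) t" for t
  have "(F has_real_derivative sin t * (?c h * p (h + 1) t * q (h + 1) t - ?c' h * p h t * q h t)) (at t)" for t
  proof -
    have Sp: "sin t * (?c h * p (h + 1) t + ?c (h - 1) * p (h - 1) t) = 2 * (of_int m - of_int h * cos t) * p h t"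
      using p(2) h(1) by (simp add: ladder_recurrence_def)
    have Sq: "sin t * (?c' (h + 1) * q (h + 1 + 1) t + ?c' (h + 1 - 1) * q (h + 1 - 1) t)
        = 2 * (of_int m - of_int (h + 1) * cos t) * q (h + 1) t"
      using q(2) h(2) unfolding ladder_recurrence_def by blast
    have "(F has_real_derivative cos t * p h t * q (h + 1) t
          + sin t * ((?c h * p (h + 1) t - ?c (h - 1) * p (h - 1) t) / 2) * q (h + 1) t
          + sin t * p h t * ((?c' (h + 1) * q (h + 1 + 1) t - ?c' (h + 1 - 1) * q (h + 1 - 1) t) / 2)) (at t)"
      unfolding F_def by (auto intro!: derivative_eq_intros ladder_odeD[OF p(1)] ladder_odeD[OF q(1)]
        simp: field_simps)
    moreover have "cos t * p h t * q (h + 1) t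
          + sin t * ((?c h * p (h + 1) t - ?c (h - 1) * p (h - 1) t) / 2) * q (h + 1) t
          + sin t * p h t * ((?c' (h + 1) * q (h + 1 + 1) t - ?c' (h + 1 - 1) * q (h + 1 - 1) t) / 2)
        = sin t * (?c h * p (h + 1) t * q (h + 1) t - ?c' h * p h t * q h t)
          - (q (h + 1) t / 2) * (sin t * (?c h * p (h + 1) t + ?c (h - 1) * p (h - 1) t)
                                 - 2 * (of_int m - of_int h * cos t) * p h t)
          + (p h t / 2) * (sin t * (?c' (h + 1) * q (h + 1 + 1) t + ?c' (h + 1 - 1) * q (h + 1 - 1) t)
                           - 2 * (of_int m - of_int (h + 1) * cos t) * q (h + 1) t)"
      by (simp add: field_simps)
    ultimately show ?thesis unfolding Sp Sq by simp
  qed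
  then have "((\<lambda>t. sin t * (?c h * p (h + 1) t * q (h + 1) t - ?c' h * p h t * q h t))
      has_integral F pi - F 0) {0..pi}"
    by (intro fundamental_theorem_of_calculus)
       (auto intro: has_field_derivative_at_within simp: has_real_derivative_iff_has_vector_derivative[symmetric])
  then show ?thesis by (simp add: F_def)
qed

lemma sin_inner_shift:
  assumes p: "ladder_ode (ladder l) UNIV p" "ladder_recurrence l m p"
    and q: "ladder_ode (ladder l') UNIV q" "ladder_recurrence l' m q"
    and h: "h \<in> {- int l..int l}" "h + 1 \<in> {- int l'..int l'}"
  shows "ladder l h * sin_inner p q (h + 1) = ladder l' h * sin_inner p q h"
proof -
  have J: "((\<lambda>t. sin t * p k t * q k t) has_integral sin_inner p q k) {0..pi}" for k
    unfolding sin_inner_def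
    by (intro integrable_integral integrable_continuous_interval continuous_intros
          ladder_ode_continuous[OF p(1)] ladder_ode_continuous[OF q(1)])
  have "((\<lambda>t. sin t * (ladder l h * p (h + 1) t * q (h + 1) t - ladder l' h * p h t * q h t)) has_integral
      ladder l h * sin_inner p q (h + 1) - ladder l' h * sin_inner p q h) {0..pi}"
    using has_integral_diff[OF has_integral_mult_right[OF J, where c = "ladder l h"]
        has_integral_mult_right[OF J, where c = "ladder l' h"]]
    by (simp add: algebra_simps)
  from has_integral_unique[OF this has_integral_ladder_shift[OF p q h]] show ?thesis
    by simp
qed

lemma sin_inner_self:
  assumes ode: "ladder_ode (ladder l) UNIV x" and rec: "ladder_recurrence l m x"
    and energy: "\<And>t. (\<Sum>h\<in>{- int l..int l}. (x h t)\<^sup>2) = 1"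
    and h: "h \<in> {- int l..int l}"
  shows "sin_inner x x h = 2 / (2 * real l + 1)"
proof -
  have step: "sin_inner x x (k + 1) = sin_inner x x k" if "k \<in> {- int l..int l - 1}" for k
    using sin_inner_shift[OF ode rec ode rec, of k] ladder_pos[OF that] that by auto
  have up: "k \<le> int l \<longrightarrow> sin_inner x x k = sin_inner x x (- int l)" if "- int l \<le> k" for k
    using that by (induction k rule: int_ge_induct) (auto simp: step)
  have const: "sin_inner x x k = sin_inner x x (- int l)" if "k \<in> {- int l..int l}" for k
    using that up[of k] by simp
  have "(\<Sum>k\<in>{- int l..int l}. sin_inner x x k)
      = integral {0..pi} (\<lambda>t. \<Sum>k\<in>{- int l..int l}. sin t * x k t * x k t)"
    unfolding sin_inner_def
    by (intro integral_sum[symmetric] integrable_continuous_interval continuous_intros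
          ladder_ode_continuous[OF ode]) simp
  also have "\<dots> = integral {0..pi} sin"
    using energy by (simp add: sum_distrib_left[symmetric] power2_eq_square mult.assoc)
  also have "\<dots> = 2" by (rule integral_sin_0_pi)
  finally have "(\<Sum>k\<in>{- int l..int l}. sin_inner x x k) = 2" .
  moreover have "(\<Sum>k\<in>{- int l..int l}. sin_inner x x k) = (\<Sum>k\<in>{- int l..int l}. sin_inner x x (- int l))"
    by (rule sum.cong[OF refl const])
  ultimately have "(2 * real l + 1) * sin_inner x x (- int l) = 2"
    by simp
  then show ?thesis
    unfolding const[OF h] by (simp add: field_simps)
qed

lemma sin_inner_orthogonal:
  assumes p: "ladder_ode (ladder l) UNIV p" "ladder_recurrence l m p"
    and q: "ladder_ode (ladder l') UNIV q" "ladder_recurrence l' m q"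
    and "l < l'" and h: "h \<in> {- int l..int l}"
  shows "sin_inner p q h = 0"
proof -
  have shift: "ladder l k * sin_inner p q (k + 1) = ladder l' k * sin_inner p q k"
    if "k \<in> {- int l..int l}" for k
    using sin_inner_shift[OF p q that] that \<open>l < l'\<close> by simp
  have pos: "ladder l' k \<noteq> 0" if "k \<in> {- int l - 1..int l}" for k
    using ladder_pos[of k l'] that \<open>l < l'\<close> by simp
  have "- int l \<le> k \<longrightarrow> sin_inner p q k = 0" if "k \<le> int l" for k
    using that
  proof (induction k rule: int_le_induct)
    case base
    show ?case using shift[of "int l"] pos[of "int l"] by simp
  next
    case (step i)
    show ?case
    proof
      assume "- int l \<le> i - 1"
      then show "sin_inner p q (i - 1) = 0"
        using step shift[of "i - 1"] pos[of "i - 1"] by simp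
    qed
  qed
  then show ?thesis using h by simp
qed

text \<open>\<open>wigner_d \<Lambda> l m h t\<close> is the matrix element \<langle>\<psi>_l^m, exp(i t L2) \<psi>_l^h\<rangle>, i.e. Wigner's
  small d-matrix d^l_mh(t).\<close>

definition wigner_d :: "nat \<Rightarrow> nat \<Rightarrow> int \<Rightarrow> int \<Rightarrow> real \<Rightarrow> real" where
  "wigner_d \<Lambda> l m h t = exp_iL2_re \<Lambda> (psi l h) (l, m) t"

lemma norm_psi_le: "\<forall>i. norm (psi l h i) \<le> 1"
  by (simp add: psi_def)

lemma real_valued_psi: "real_valued (psi l h)"
  by (simp add: psi_def real_valued_def)

lemma wigner_d_0: "wigner_d \<Lambda> l m h 0 = (if h = m then 1 else 0)"
  unfolding wigner_d_def exp_iL2_re_def powser_zero by (simp add: psi_def)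

lemma wigner_d_outside:
  assumes "\<not> \<bar>h\<bar> \<le> int l" and "\<bar>m\<bar> \<le> int l"
  shows "wigner_d \<Lambda> l m h t = 0"
proof -
  have "iL2 \<Lambda> (psi l h) = (\<lambda>i. 0)"
    using assms(1) by (intro iL2_eq_0) (auto simp: psi_def Idx_def)
  then have "(iL2 \<Lambda> ^^ k) (psi l h) (l, m) = 0" for k
    using assms coeff_linear_zero[OF coeff_linear_funpow[OF coeff_linear_iL2]]
    by (cases k) (auto simp: psi_def funpow_Suc_right simp del: funpow.simps)
  then show ?thesis by (simp add: wigner_d_def exp_iL2_re_def)
qed

lemma wigner_d_ode:
  assumes "l \<le> \<Lambda>" and "\<bar>m\<bar> \<le> int l"
  shows "ladder_ode (ladder l) UNIV (wigner_d \<Lambda> l m)"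
  unfolding ladder_ode_def
proof (intro ballI allI)
  fix h t
  let ?d = "wigner_d \<Lambda> l m"
  show "(?d h has_real_derivative (ladder l h * ?d (h + 1) t - ladder l (h - 1) * ?d (h - 1) t) / 2) (at t)"
  proof (cases "\<bar>h\<bar> \<le> int l")
    case True
    then have "(l, h) \<in> Idx \<Lambda>" using assms by (simp add: Idx_def)
    have "(?d h has_real_derivative exp_iL2_re \<Lambda> (iL2 \<Lambda> (psi l h)) (l, m) t) (at t)"
      unfolding wigner_d_def by (rule exp_iL2_re_has_derivative[OF norm_psi_le])
    also have "exp_iL2_re \<Lambda> (iL2 \<Lambda> (psi l h)) (l, m) t
        = ladder l h / 2 * ?d (h + 1) t + (- ladder l (h - 1) / 2) * ?d (h - 1) t"
      unfolding iL2_psi[OF \<open>(l, h) \<in> Idx \<Lambda>\<close>] wigner_d_def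
      by (rule exp_iL2_re_combination[OF norm_psi_le norm_psi_le])
    finally show ?thesis by (simp add: field_simps)
  next
    case False
    have "ladder l h * ?d (h + 1) t = 0"
      using False assms by (cases "h = - int l - 1") (simp_all add: wigner_d_outside)
    moreover have "ladder l (h - 1) * ?d (h - 1) t = 0"
      using False assms by (cases "h = int l + 1") (simp_all add: wigner_d_outside)
    ultimately have rhs: "(ladder l h * ?d (h + 1) t - ladder l (h - 1) * ?d (h - 1) t) / 2 = 0"
      by (simp only: diff_self div_0)
    have "?d h = (\<lambda>t. 0)"
      using False assms by (simp add: wigner_d_outside fun_eq_iff)
    then show ?thesis unfolding rhs by simp
  qed
qed

lemma wigner_d_recurrence:
  "l \<le> \<Lambda> \<Longrightarrow> \<bar>m\<bar> \<le> int l \<Longrightarrow> ladder_recurrence l m (wigner_d \<Lambda> l m)"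
  by (intro ladder_ode_recurrence wigner_d_ode) (simp_all add: wigner_d_0)

lemma wigner_d_sin_inner_self:
  assumes "l \<le> \<Lambda>" and "\<bar>m\<bar> \<le> int l" and "h \<in> {- int l..int l}"
  shows "sin_inner (wigner_d \<Lambda> l m) (wigner_d \<Lambda> l m) h = 2 / (2 * real l + 1)"
proof -
  have "\<forall>h\<in>{- int l..int l}. wigner_d \<Lambda> l m h 0 = (if h = m then 1 else 0)"
    by (simp add: wigner_d_0)
  then show ?thesis
    using assms by (intro sin_inner_self[where m = m] wigner_d_ode wigner_d_recurrence
        ladder_ode_unit_energy[where m = m]) auto
qed

lemma wigner_d_sin_inner_orthogonal:
  assumes "l \<le> \<Lambda>" "l' \<le> \<Lambda>" "l \<noteq> l'"
    and "\<bar>m\<bar> \<le> int l" "\<bar>m\<bar> \<le> int l'" "\<bar>h\<bar> \<le> int l" "\<bar>h\<bar> \<le> int l'"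
  shows "sin_inner (wigner_d \<Lambda> l m) (wigner_d \<Lambda> l' m) h = 0"
proof -
  have comm: "sin_inner p q h = sin_inner q p h" for p q
    unfolding sin_inner_def by (simp add: mult_ac)
  have less: "sin_inner (wigner_d \<Lambda> a m) (wigner_d \<Lambda> b m) h = 0"
    if "a \<le> \<Lambda>" "b \<le> \<Lambda>" "a < b" "\<bar>m\<bar> \<le> int a" "\<bar>h\<bar> \<le> int a" for a b
    using that
    by (intro sin_inner_orthogonal[where l = a and l' = b and m = m]
          wigner_d_ode wigner_d_recurrence) auto
  show ?thesis
  proof (cases "l < l'")
    case True
    then show ?thesis using assms by (intro less) auto
  next
    case False
    then have "l' < l" using assms by simp
    then show ?thesis using less[of l' l] assms comm by simp
  qed
qed

lemma wigner_d_minus: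
  assumes "l \<le> \<Lambda>" and "\<bar>m\<bar> \<le> int l" and h: "h \<in> {- int l..int l}"
  shows "wigner_d \<Lambda> l (- m) (- h) t = (- 1) powi (m - h) * wigner_d \<Lambda> l m h t"
proof -
  let ?s = "\<lambda>n. (- 1 :: real) powi n" and ?d = "wigner_d \<Lambda> l m" and ?d' = "wigner_d \<Lambda> l (- m)"
  have s_Suc: "?s (m - (k + 1)) = - ?s (m - k)" and s_pred: "?s (m - (k - 1)) = - ?s (m - k)" for k
    using power_int_add_1[of "- 1 :: real" "m - k - 1"] power_int_add_1[of "- 1 :: real" "m - k"]
    by (simp_all add: algebra_simps)
  define k where "k h t = ?s (m - h) * ?d' (- h) t - ?d h t" for h t
  have k_ode: "ladder_ode (ladder l) UNIV k"
    unfolding ladder_ode_def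
  proof (intro ballI allI)
    fix h t
    have "\<bar>- m\<bar> \<le> int l" using assms by simp
    then have d: "(k h has_real_derivative
        ?s (m - h) * ((ladder l (- h) * ?d' (- h + 1) t - ladder l (- h - 1) * ?d' (- h - 1) t) / 2)
        - (ladder l h * ?d (h + 1) t - ladder l (h - 1) * ?d (h - 1) t) / 2) (at t)"
      unfolding k_def using assms
      by (auto intro!: derivative_eq_intros ladder_odeD[OF wigner_d_ode] simp: field_simps)
    have c: "ladder l (- h - 1) = ladder l h"
      using ladder_minus[of l "h + 1"] by simp
    have e: "- (h + 1) = - h - 1" "- (h - 1) = - h + 1" by simp_all
    from d show "(k h has_real_derivative (ladder l h * k (h + 1) t - ladder l (h - 1) * k (h - 1) t) / 2) (at t)"
      by (rule DERIV_cong) (unfold k_def s_Suc s_pred e, simp add: c ladder_minus field_simps)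
  qed
  have "k h 0 = 0" for h
    by (simp add: k_def wigner_d_0)
  then have "k h t = 0"
    using h by (intro ladder_ode_eq_0[OF ladder_ode_subset[OF k_ode]]) simp_all
  then have "?s (m - h) * (?s (m - h) * ?d' (- h) t) = ?s (m - h) * ?d h t"
    by (simp add: k_def)
  then show ?thesis by simp
qed

lemma exp_iL2_psi_same: "exp_iL2 \<Lambda> t (psi l h) (l, m) = of_real (wigner_d \<Lambda> l m h t)"
  unfolding wigner_d_def by (rule exp_iL2_eq_of_real[OF norm_psi_le real_valued_psi])

lemma exp_iL2_psi_other:
  assumes "l' \<noteq> l"
  shows "exp_iL2 \<Lambda> t (psi l h) (l', m) = 0"
proof -
  have "in_block l (psi l h)" by (auto simp: in_block_def psi_def)
  then have "(iL2 \<Lambda> ^^ k) (psi l h) (l', m) = 0" for k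
    using in_block_iL2_funpow assms unfolding in_block_def by blast
  then show ?thesis unfolding exp_iL2_apply by simp
qed

lemma finite_Idx: "finite (Idx \<Lambda>)"
  by (rule finite_subset[of _ "{0..\<Lambda>} \<times> {- int \<Lambda>..int \<Lambda>}"]) (auto simp: Idx_def)

lemma HS_psi_expansion:
  assumes "w \<in> HS \<Lambda>"
  shows "w = (\<lambda>i. \<Sum>j\<in>Idx \<Lambda>. w j * psi (fst j) (snd j) i)"
proof
  fix i
  have "(\<Sum>j\<in>Idx \<Lambda>. w j * psi (fst j) (snd j) i) = (\<Sum>j\<in>Idx \<Lambda>. if j = i then w j else 0)"
    by (intro sum.cong) (auto simp: psi_def)
  also have "\<dots> = w i"
    using assms finite_Idx[of \<Lambda>] by (cases i) (auto simp: HS_def)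
  finally show "w i = (\<Sum>j\<in>Idx \<Lambda>. w j * psi (fst j) (snd j) i)" by simp
qed

lemma exp_iL2_HS:
  assumes w: "w \<in> HS \<Lambda>" and lm: "(l, m) \<in> Idx \<Lambda>"
  shows "exp_iL2 \<Lambda> t w (l, m) = (\<Sum>h\<in>{- int l..int l}. w (l, h) * of_real (wigner_d \<Lambda> l m h t))"
proof -
  let ?f = "\<lambda>j. w j * exp_iL2 \<Lambda> t (psi (fst j) (snd j)) (l, m)"
  have "exp_iL2 \<Lambda> t w (l, m) = (\<Sum>j\<in>Idx \<Lambda>. ?f j)"
    by (subst HS_psi_expansion[OF w], rule exp_iL2_sum[OF finite_Idx norm_psi_le])
  also have "\<dots> = (\<Sum>j\<in>(\<lambda>h. (l, h)) ` {- int l..int l}. ?f j)"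
  proof (rule sum.mono_neutral_right[OF finite_Idx])
    show "(\<lambda>h. (l, h)) ` {- int l..int l} \<subseteq> Idx \<Lambda>" using lm by (auto simp: Idx_def)
    show "\<forall>j\<in>Idx \<Lambda> - (\<lambda>h. (l, h)) ` {- int l..int l}. ?f j = 0"
      by (auto simp: Idx_def image_iff exp_iL2_psi_other)
  qed
  also have "\<dots> = (\<Sum>h\<in>{- int l..int l}. w (l, h) * of_real (wigner_d \<Lambda> l m h t))"
    by (subst sum.reindex) (auto simp: inj_on_def exp_iL2_psi_same)
  finally show ?thesis .
qed

definition exp_iL3 :: "nat \<Rightarrow> real \<Rightarrow> vec \<Rightarrow> vec" where
  "exp_iL3 \<Lambda> a = op_exp (scaleop (\<i> * of_real a) (L3 \<Lambda>))"

lemma repr_eq: "repr \<Lambda> \<phi> \<theta> \<psi> v = exp_iL3 \<Lambda> \<phi> (exp_iL2 \<Lambda> \<theta> (exp_iL3 \<Lambda> \<psi> v))"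
  by (simp add: repr_def exp_iL3_def exp_iL2_def)

lemma coeff_linear_L3: "coeff_linear (L3 \<Lambda>)"
  unfolding coeff_linear_def L3_def by (auto simp: fun_eq_iff field_simps)

lemma L3_funpow_apply:
  "(L3 \<Lambda> ^^ k) v (l, m)
     = (if (l, m) \<in> Idx \<Lambda> then of_int m ^ k * v (l, m) else if k = 0 then v (l, m) else 0)"
  by (induction k) (auto simp: L3_def)

lemma exp_iL3_apply:
  "exp_iL3 \<Lambda> a v (l, m) = (if (l, m) \<in> Idx \<Lambda> then cis (of_int m * a) * v (l, m) else v (l, m))"
proof -
  have pw: "(scaleop (\<i> * of_real a) (L3 \<Lambda>) ^^ k) v (l, m) = (\<i> * of_real a) ^ k * (L3 \<Lambda> ^^ k) v (l, m)" for k
    by (simp add: funpow_scaleop[OF coeff_linear_L3])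
  show ?thesis
  proof (cases "(l, m) \<in> Idx \<Lambda>")
    case True
    have "(\<lambda>k. (\<i> * of_real a * of_int m) ^ k /\<^sub>R fact k * v (l, m)) sums (exp (\<i> * of_real a * of_int m) * v (l, m))"
      by (intro sums_mult2 exp_converges)
    moreover have "(\<lambda>k. (\<i> * of_real a * of_int m) ^ k /\<^sub>R fact k * v (l, m))
        = (\<lambda>k. (scaleop (\<i> * of_real a) (L3 \<Lambda>) ^^ k) v (l, m) / of_nat (fact k))"
      using True by (auto simp: pw L3_funpow_apply scaleR_conv_of_real power_mult_distrib field_simps)
    ultimately show ?thesis
      using True by (simp add: exp_iL3_def op_exp_def sums_unique[symmetric] cis_conv_exp mult_ac)
  next
    case False
    have "(\<lambda>k. (scaleop (\<i> * of_real a) (L3 \<Lambda>) ^^ k) v (l, m) / of_nat (fact k)) = (\<lambda>k. if k = 0 then v (l, m) else 0)"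
      using False by (auto simp: pw L3_funpow_apply)
    then show ?thesis
      using False sums_single[of 0 "\<lambda>_. v (l, m)"] by (simp add: exp_iL3_def op_exp_def sums_unique[symmetric])
  qed
qed

definition repr_coeff :: "nat \<Rightarrow> vec \<Rightarrow> real \<Rightarrow> real \<Rightarrow> real \<Rightarrow> nat \<Rightarrow> int \<Rightarrow> complex" where
  "repr_coeff \<Lambda> w \<phi> \<theta> \<psi> l m = cis (of_int m * \<phi>) *
     (\<Sum>h\<in>{- int l..int l}. cis (of_int h * \<psi>) * w (l, h) * of_real (wigner_d \<Lambda> l m h \<theta>))"

lemma repr_apply:
  assumes w: "w \<in> HS \<Lambda>"
  shows "repr \<Lambda> \<phi> \<theta> \<psi> w (l, m) = (if (l, m) \<in> Idx \<Lambda> then repr_coeff \<Lambda> w \<phi> \<theta> \<psi> l m else 0)"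
proof -
  have w3: "exp_iL3 \<Lambda> \<psi> w \<in> HS \<Lambda>" using w by (auto simp: HS_def exp_iL3_apply)
  show ?thesis
  proof (cases "(l, m) \<in> Idx \<Lambda>")
    case True
    have "exp_iL2 \<Lambda> \<theta> (exp_iL3 \<Lambda> \<psi> w) (l, m)
        = (\<Sum>h\<in>{- int l..int l}. exp_iL3 \<Lambda> \<psi> w (l, h) * of_real (wigner_d \<Lambda> l m h \<theta>))"
      by (rule exp_iL2_HS[OF w3 True])
    also have "\<dots> = (\<Sum>h\<in>{- int l..int l}. cis (of_int h * \<psi>) * w (l, h) * of_real (wigner_d \<Lambda> l m h \<theta>))"
      using True by (intro sum.cong refl) (auto simp: exp_iL3_apply Idx_def)
    finally show ?thesis using True by (simp add: repr_eq exp_iL3_apply repr_coeff_def)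
  next
    case False
    then show ?thesis using w w3 by (simp add: repr_eq exp_iL3_apply exp_iL2_outside HS_def)
  qed
qed

lemma has_integral_cis_int:
  fixes n :: int
  shows "((\<lambda>x. cis (of_int n * x)) has_integral of_real (2 * pi) * of_bool (n = 0)) {0..2 * pi}"
proof (cases "n = 0")
  case True
  then show ?thesis
    using has_integral_const_real[of "1 :: complex" 0 "2 * pi"] by (simp add: scaleR_conv_of_real)
next
  case False
  define F where "F x = cis (of_int n * x) / (\<i> * of_int n)" for x :: real
  have "(F has_vector_derivative cis (of_int n * x)) (at x within {0..2 * pi})" for x
  proof -
    have "((\<lambda>z. exp (\<i> * of_int n * z) / (\<i> * of_int n)) has_field_derivative
           exp (\<i> * of_int n * of_real x)) (at (of_real x))"
      using False by (auto intro!: derivative_eq_intros)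
    then show ?thesis
      unfolding F_def cis_conv_exp by (auto dest: has_vector_derivative_real_field simp: mult_ac)
  qed
  then have "((\<lambda>x. cis (of_int n * x)) has_integral F (2 * pi) - F 0) {0..2 * pi}"
    by (intro fundamental_theorem_of_calculus) auto
  moreover have "cis (of_int n * (2 * pi)) = 1"
    using cis_multiple_2pi[of "of_int n"] by (simp add: mult_ac)
  ultimately show ?thesis using False by (simp add: F_def)
qed

lemma has_integral_euler_angles:
  fixes f :: "real \<times> real \<times> real \<Rightarrow> 'a::banach"
  assumes "(f has_integral I) ({0..2 * pi} \<times> {0..pi} \<times> {0..2 * pi})"
  shows "(f has_integral I) euler_angles"
proof -
  let ?C = "{0..2 * pi} \<times> {0..pi} \<times> {0..2 * pi}"
  have "negligible ({p. (1, 0, 0) \<bullet> p = 2 * pi} \<union> {p. (0, 0, 1) \<bullet> p = (2 * pi :: real)})"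
    by (intro negligible_Un negligible_hyperplane) auto
  moreover have "?C - euler_angles \<subseteq> {p. (1, 0, 0) \<bullet> p = 2 * pi} \<union> {p. (0, 0, 1) \<bullet> p = 2 * pi}"
    by (auto simp: euler_angles_def)
  ultimately have "negligible {x \<in> ?C - euler_angles. f x \<noteq> 0}"
    by (blast intro: negligible_subset)
  moreover have "{x \<in> euler_angles - ?C. f x \<noteq> 0} = {}"
    by (auto simp: euler_angles_def)
  then have "negligible {x \<in> euler_angles - ?C. f x \<noteq> 0}"
    by (metis negligible_empty)
  ultimately show ?thesis
    using has_integral_spike_set_eq assms by blast
qed

lemma continuous_on_tensor_product:
  fixes f :: "'a::topological_space \<Rightarrow> 'c::real_normed_algebra"
  assumes f: "continuous_on A f" and g: "continuous_on B g"
  shows "continuous_on (A \<times> B) (\<lambda>(x, y). f x * g y)"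
  unfolding case_prod_unfold
  by (intro continuous_intros continuous_on_compose2[OF f] continuous_on_compose2[OF g]) auto

lemma has_integral_tensor_product:
  fixes f :: "'a::euclidean_space \<Rightarrow> complex" and g :: "'b::euclidean_space \<Rightarrow> complex"
  assumes f: "continuous_on (cbox a b) f" and g: "continuous_on (cbox c d) g"
  shows "((\<lambda>(x, y). f x * g y) has_integral integral (cbox a b) f * integral (cbox c d) g)
           (cbox (a, c) (b, d))"
proof -
  have cont: "continuous_on (cbox (a, c) (b, d)) (\<lambda>(x, y). f x * g y)"
    unfolding cbox_Pair_eq using f g by (rule continuous_on_tensor_product)
  have "integral (cbox (a, c) (b, d)) (\<lambda>(x, y). f x * g y)
      = integral (cbox a b) (\<lambda>x. integral (cbox c d) (\<lambda>y. f x * g y))"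
    using integral_prod_continuous[OF cont] by simp
  also have "\<dots> = integral (cbox a b) f * integral (cbox c d) g"
    by simp
  finally show ?thesis
    using integrable_continuous[OF cont] by (metis integrable_integral)
qed

lemma has_integral_euler_angles_product:
  fixes f g k :: "real \<Rightarrow> complex"
  assumes "continuous_on {0..2 * pi} f" "continuous_on {0..pi} g" "continuous_on {0..2 * pi} k"
    and "(f has_integral A) {0..2 * pi}" "(g has_integral B) {0..pi}" "(k has_integral C) {0..2 * pi}"
  shows "((\<lambda>(x, y, z). f x * g y * k z) has_integral A * B * C) euler_angles"
proof -
  have gk: "((\<lambda>(y, z). g y * k z) has_integral B * C) (cbox (0, 0) (pi, 2 * pi))"
    using has_integral_tensor_product[of 0 pi g 0 "2 * pi" k] assms by (simp add: integral_unique)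
  moreover have "continuous_on (cbox (0, 0) (pi, 2 * pi)) (\<lambda>(y, z). g y * k z)"
    unfolding cbox_Pair_eq using assms by (intro continuous_on_tensor_product) auto
  ultimately have "((\<lambda>(x, q). f x * (case q of (y, z) \<Rightarrow> g y * k z)) has_integral A * (B * C))
      (cbox (0, (0, 0)) (2 * pi, (pi, 2 * pi)))"
    using has_integral_tensor_product[of 0 "2 * pi" f "(0, 0)" "(pi, 2 * pi)" "\<lambda>(y, z). g y * k z"] assms
    by (simp add: integral_unique)
  then show ?thesis
    by (intro has_integral_euler_angles) (simp add: cbox_Pair_eq case_prod_unfold mult.assoc)
qed

lemma has_integral_cis_cnj:
  "((\<lambda>x. cis (of_int m * x) * cnj (cis (of_int m' * x))) has_integral of_real (2 * pi) * of_bool (m = m'))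
     {0..2 * pi}"
  using has_integral_cis_int[of "m - m'"] by (simp add: cis_cnj cis_mult algebra_simps)

lemma repr_coeff_product_expansion:
  "of_real (sin \<theta>) * (repr_coeff \<Lambda> w \<phi> \<theta> \<psi> l m * cnj (repr_coeff \<Lambda> w \<phi> \<theta> \<psi> l' m'))
   = (\<Sum>h\<in>{- int l..int l}. \<Sum>h'\<in>{- int l'..int l'}. w (l, h) * cnj (w (l', h')) *
        (cis (of_int m * \<phi>) * cnj (cis (of_int m' * \<phi>))
         * of_real (sin \<theta> * wigner_d \<Lambda> l m h \<theta> * wigner_d \<Lambda> l' m' h' \<theta>)
         * (cis (of_int h * \<psi>) * cnj (cis (of_int h' * \<psi>)))))"
  unfolding repr_coeff_def by (simp add: sum_product sum_distrib_left mult_ac) (rule sum.swap)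

lemma has_integral_repr_coeff_product:
  assumes "l \<le> \<Lambda>" "\<bar>m\<bar> \<le> int l" "l' \<le> \<Lambda>" "\<bar>m'\<bar> \<le> int l'"
  shows "((\<lambda>(\<phi>, \<theta>, \<psi>). of_real (sin \<theta>) * (repr_coeff \<Lambda> w \<phi> \<theta> \<psi> l m * cnj (repr_coeff \<Lambda> w \<phi> \<theta> \<psi> l' m')))
     has_integral of_real (4 * pi\<^sup>2) * of_bool (m = m') *
       (\<Sum>h\<in>{- int l..int l} \<inter> {- int l'..int l'}.
          w (l, h) * cnj (w (l', h)) * of_real (sin_inner (wigner_d \<Lambda> l m) (wigner_d \<Lambda> l' m') h)))
     euler_angles"
proof -
  let ?d = "wigner_d \<Lambda> l m" and ?d' = "wigner_d \<Lambda> l' m'"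
  let ?J = "\<lambda>h h'. integral {0..pi} (\<lambda>\<theta>. sin \<theta> * ?d h \<theta> * ?d' h' \<theta>)"
  have summand: "((\<lambda>(\<phi>, \<theta>, \<psi>). cis (of_int m * \<phi>) * cnj (cis (of_int m' * \<phi>))
         * of_real (sin \<theta> * ?d h \<theta> * ?d' h' \<theta>) * (cis (of_int h * \<psi>) * cnj (cis (of_int h' * \<psi>))))
      has_integral (of_real (2 * pi) * of_bool (m = m')) * of_real (?J h h')
        * (of_real (2 * pi) * of_bool (h = h'))) euler_angles" for h h'
  proof (rule has_integral_euler_angles_product)
    have "continuous_on {0..pi} (\<lambda>\<theta>. sin \<theta> * ?d h \<theta> * ?d' h' \<theta>)"
      using assms by (intro continuous_intros ladder_ode_continuous[OF wigner_d_ode])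
    then show "((\<lambda>\<theta>. complex_of_real (sin \<theta> * ?d h \<theta> * ?d' h' \<theta>)) has_integral of_real (?J h h')) {0..pi}"
      by (intro has_integral_of_real integrable_integral integrable_continuous_interval)
    show "continuous_on {0..pi} (\<lambda>\<theta>. complex_of_real (sin \<theta> * ?d h \<theta> * ?d' h' \<theta>))"
      using assms by (intro continuous_intros ladder_ode_continuous[OF wigner_d_ode])
  qed (rule has_integral_cis_cnj | intro continuous_intros)+
  have "((\<lambda>(\<phi>, \<theta>, \<psi>). of_real (sin \<theta>) * (repr_coeff \<Lambda> w \<phi> \<theta> \<psi> l m * cnj (repr_coeff \<Lambda> w \<phi> \<theta> \<psi> l' m')))
     has_integral (\<Sum>h\<in>{- int l..int l}. \<Sum>h'\<in>{- int l'..int l'}. w (l, h) * cnj (w (l', h')) *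
        ((of_real (2 * pi) * of_bool (m = m')) * of_real (?J h h') * (of_real (2 * pi) * of_bool (h = h')))))
     euler_angles"
    unfolding case_prod_unfold repr_coeff_product_expansion
    using summand[unfolded case_prod_unfold]
    by (intro has_integral_sum finite_atLeastAtMost_int has_integral_mult_right)
  also have "(\<Sum>h\<in>{- int l..int l}. \<Sum>h'\<in>{- int l'..int l'}. w (l, h) * cnj (w (l', h')) *
        ((of_real (2 * pi) * of_bool (m = m')) * of_real (?J h h') * (of_real (2 * pi) * of_bool (h = h'))))
      = (\<Sum>h\<in>{- int l..int l}. if h \<in> {- int l'..int l'}
           then of_real (4 * pi\<^sup>2) * of_bool (m = m') * (w (l, h) * cnj (w (l', h)) * of_real (sin_inner ?d ?d' h))
           else 0)"
    by (intro sum.cong refl) (simp add: of_bool_def power2_eq_square mult_ac if_distrib sin_inner_def cong: if_cong)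
  also have "\<dots> = (\<Sum>h\<in>{- int l..int l} \<inter> {- int l'..int l'}.
      of_real (4 * pi\<^sup>2) * of_bool (m = m') * (w (l, h) * cnj (w (l', h)) * of_real (sin_inner ?d ?d' h)))"
    by (subst sum.inter_restrict) simp_all
  also have "\<dots> = of_real (4 * pi\<^sup>2) * of_bool (m = m') *
       (\<Sum>h\<in>{- int l..int l} \<inter> {- int l'..int l'}. w (l, h) * cnj (w (l', h)) * of_real (sin_inner ?d ?d' h))"
    by (simp only: sum_distrib_left)
  finally show ?thesis .
qed

lemma wigner_d_gram_sum:
  assumes norms: "\<forall>l\<le>\<Lambda>. (\<Sum>h\<in>{- int l..int l}. (cmod (w (l, h)))\<^sup>2) = (2 * real l + 1) / (real \<Lambda> + 1)\<^sup>2"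
    and lm: "l \<le> \<Lambda>" "\<bar>m\<bar> \<le> int l" and lm': "l' \<le> \<Lambda>" "\<bar>m\<bar> \<le> int l'"
  shows "(\<Sum>h\<in>{- int l..int l} \<inter> {- int l'..int l'}.
            w (l, h) * cnj (w (l', h)) * of_real (sin_inner (wigner_d \<Lambda> l m) (wigner_d \<Lambda> l' m) h))
       = of_bool (l = l') * of_real (2 / (real \<Lambda> + 1)\<^sup>2)"
proof (cases "l = l'")
  case True
  have norm_sum: "(\<Sum>h\<in>{- int l..int l}. (cmod (w (l, h)))\<^sup>2) * (2 / (2 * real l + 1))
      = 2 / (real \<Lambda> + 1)\<^sup>2"
    using norms lm(1) by (simp add: field_simps)
  have "(\<Sum>h\<in>{- int l..int l} \<inter> {- int l'..int l'}.
          w (l, h) * cnj (w (l', h)) * of_real (sin_inner (wigner_d \<Lambda> l m) (wigner_d \<Lambda> l' m) h))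
      = (\<Sum>h\<in>{- int l..int l}. of_real ((cmod (w (l, h)))\<^sup>2 * (2 / (2 * real l + 1))))"
    using True lm by (intro sum.cong) (auto simp: wigner_d_sin_inner_self simp flip: complex_norm_square)
  also have "\<dots> = of_real (2 / (real \<Lambda> + 1)\<^sup>2)"
    by (simp only: norm_sum flip: of_real_sum sum_distrib_right)
  finally show ?thesis using True by simp
next
  case False
  then show ?thesis
    using lm lm' by (intro trans[OF sum.neutral]) (auto simp: wigner_d_sin_inner_orthogonal)
qed

lemma has_integral_repr_coeff_orthonormal:
  assumes norms: "\<forall>l\<le>\<Lambda>. (\<Sum>h\<in>{- int l..int l}. (cmod (w (l, h)))\<^sup>2) = (2 * real l + 1) / (real \<Lambda> + 1)\<^sup>2"
    and lm: "l \<le> \<Lambda>" "\<bar>m\<bar> \<le> int l" and lm': "l' \<le> \<Lambda>" "\<bar>m'\<bar> \<le> int l'"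
  shows "((\<lambda>(\<phi>, \<theta>, \<psi>). of_real ((real \<Lambda> + 1)\<^sup>2 / (8 * pi\<^sup>2) * sin \<theta>)
            * (repr_coeff \<Lambda> w \<phi> \<theta> \<psi> l m * cnj (repr_coeff \<Lambda> w \<phi> \<theta> \<psi> l' m')))
     has_integral of_bool ((l, m) = (l', m'))) euler_angles"
proof -
  define C where "C = (real \<Lambda> + 1)\<^sup>2 / (8 * pi\<^sup>2)"
  define S where "S = (\<Sum>h\<in>{- int l..int l} \<inter> {- int l'..int l'}.
    w (l, h) * cnj (w (l', h)) * of_real (sin_inner (wigner_d \<Lambda> l m) (wigner_d \<Lambda> l' m') h))"
  have total: "of_real C * (of_real (4 * pi\<^sup>2) * of_bool (m = m') * S) = (of_bool ((l, m) = (l', m')) :: complex)"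
  proof (cases "m = m'")
    case True
    then have "of_real C * (of_real (4 * pi\<^sup>2) * of_bool (m = m') * S)
        = of_bool (l = l') * (of_real (C * (4 * pi\<^sup>2 * (2 / (real \<Lambda> + 1)\<^sup>2))) :: complex)"
      using wigner_d_gram_sum[OF norms lm] lm' by (simp add: S_def)
    also have "C * (4 * pi\<^sup>2 * (2 / (real \<Lambda> + 1)\<^sup>2)) = 1"
      by (simp add: C_def field_simps)
    finally show ?thesis using True by simp
  qed simp
  have "((\<lambda>(\<phi>, \<theta>, \<psi>). of_real (sin \<theta>) * (repr_coeff \<Lambda> w \<phi> \<theta> \<psi> l m * cnj (repr_coeff \<Lambda> w \<phi> \<theta> \<psi> l' m')))
      has_integral of_real (4 * pi\<^sup>2) * of_bool (m = m') * S) euler_angles"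
    unfolding S_def using lm lm' by (rule has_integral_repr_coeff_product)
  from has_integral_mult_right[OF this, where c = "of_real C"]
  have "((\<lambda>(\<phi>, \<theta>, \<psi>). of_real (C * sin \<theta>)
            * (repr_coeff \<Lambda> w \<phi> \<theta> \<psi> l m * cnj (repr_coeff \<Lambda> w \<phi> \<theta> \<psi> l' m')))
     has_integral of_bool ((l, m) = (l', m'))) euler_angles"
    unfolding total by (simp add: case_prod_unfold mult.assoc)
  then show ?thesis by (simp only: C_def)
qed

lemma inprod_repr:
  assumes "w \<in> HS \<Lambda>"
  shows "inprod \<Lambda> (repr \<Lambda> \<phi> \<theta> \<psi> w) v
       = (\<Sum>j\<in>Idx \<Lambda>. cnj (repr_coeff \<Lambda> w \<phi> \<theta> \<psi> (fst j) (snd j)) * v j)"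
  unfolding inprod_def by (intro sum.cong refl) (auto simp: repr_apply[OF assms])

lemma resolution_of_identity:
  assumes w: "w \<in> HS \<Lambda>"
    and norms: "\<forall>l\<le>\<Lambda>. (\<Sum>h\<in>{- int l..int l}. (cmod (w (l, h)))\<^sup>2) = (2 * real l + 1) / (real \<Lambda> + 1)\<^sup>2"
    and v: "v \<in> HS \<Lambda>"
  shows "((\<lambda>(\<phi>, \<theta>, \<psi>). complex_of_real ((real \<Lambda> + 1)\<^sup>2 / (8 * pi\<^sup>2) * sin \<theta>)
            * (repr \<Lambda> \<phi> \<theta> \<psi> w i * inprod \<Lambda> (repr \<Lambda> \<phi> \<theta> \<psi> w) v)) has_integral v i) euler_angles"
proof -
  obtain l m where i: "i = (l, m)" by (cases i)
  let ?C = "(real \<Lambda> + 1)\<^sup>2 / (8 * pi\<^sup>2)"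
  show ?thesis
  proof (cases "(l, m) \<in> Idx \<Lambda>")
    case False
    then have "(\<lambda>(\<phi>, \<theta>, \<psi>). complex_of_real (?C * sin \<theta>)
        * (repr \<Lambda> \<phi> \<theta> \<psi> w i * inprod \<Lambda> (repr \<Lambda> \<phi> \<theta> \<psi> w) v)) = (\<lambda>x. 0)"
      by (auto simp: fun_eq_iff i repr_apply[OF w])
    moreover have "v i = 0" using False v by (simp add: HS_def i)
    ultimately show ?thesis by simp
  next
    case True
    then have lm: "l \<le> \<Lambda>" "\<bar>m\<bar> \<le> int l" by (auto simp: Idx_def)
    let ?f = "\<lambda>j (\<phi>, \<theta>, \<psi>). of_real (?C * sin \<theta>)
      * (repr_coeff \<Lambda> w \<phi> \<theta> \<psi> l m * cnj (repr_coeff \<Lambda> w \<phi> \<theta> \<psi> (fst j) (snd j)))"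
    have "(?f j has_integral of_bool ((l, m) = j)) euler_angles" if "j \<in> Idx \<Lambda>" for j
      using that has_integral_repr_coeff_orthonormal[OF norms lm, of "fst j" "snd j"]
      by (cases j) (auto simp: Idx_def)
    then have "((\<lambda>x. \<Sum>j\<in>Idx \<Lambda>. v j * ?f j x) has_integral (\<Sum>j\<in>Idx \<Lambda>. v j * of_bool ((l, m) = j)))
        euler_angles"
      by (intro has_integral_sum finite_Idx has_integral_mult_right)
    moreover have "(\<Sum>j\<in>Idx \<Lambda>. v j * of_bool ((l, m) = j)) = v i"
      using True finite_Idx[of \<Lambda>] by (simp add: i of_bool_def if_distrib sum.delta cong: if_cong)
    moreover have "(\<lambda>x. \<Sum>j\<in>Idx \<Lambda>. v j * ?f j x) = (\<lambda>(\<phi>, \<theta>, \<psi>). complex_of_real (?C * sin \<theta>)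
        * (repr \<Lambda> \<phi> \<theta> \<psi> w i * inprod \<Lambda> (repr \<Lambda> \<phi> \<theta> \<psi> w) v))"
      using True by (auto simp: fun_eq_iff i repr_apply[OF w] inprod_repr[OF w] sum_distrib_left mult_ac)
    ultimately show ?thesis by simp
  qed
qed

definition reflect_angle :: "real \<Rightarrow> real" where
  "reflect_angle x = (if x \<le> pi then pi - x else 3 * pi - x)"

lemma reflect_angle_range: "x \<in> {0..<2 * pi} \<Longrightarrow> reflect_angle x \<in> {0..<2 * pi}"
  by (auto simp: reflect_angle_def)

lemma cis_reflect_angle: "cis (of_int n * reflect_angle x) = (- 1) powi n * cis (of_int (- n) * x)"
proof -
  have "cis (of_int n * (pi - x)) = cis (of_int n * pi) * cis (of_int (- n) * x)"
    by (simp add: cis_mult algebra_simps)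
  also have "cis (of_int n * pi) = (- 1) powi n"
    using cis_power_int[of pi n] by simp
  finally have pi_minus: "cis (of_int n * (pi - x)) = (- 1) powi n * cis (of_int (- n) * x)" .
  have "cis (of_int n * (3 * pi - x)) = cis (of_int n * (pi - x)) * cis (2 * pi * of_int n)"
    by (simp add: cis_mult algebra_simps)
  then have "cis (of_int n * (3 * pi - x)) = cis (of_int n * (pi - x))"
    by simp
  then show ?thesis
    using pi_minus by (simp add: reflect_angle_def)
qed

lemma sum_int_reflect: "(\<Sum>h\<in>{- n..n}. g h) = (\<Sum>h\<in>{- n..n}. g (- h :: int))"
  by (rule sum.reindex_bij_witness[of _ uminus uminus]) auto

lemma repr_coeff_minus:
  assumes sym: "\<forall>l h. w (l, h) = w (l, - h)" and lm: "l \<le> \<Lambda>" "\<bar>m\<bar> \<le> int l"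
  shows "repr_coeff \<Lambda> w \<phi> \<theta> \<psi> l (- m) = repr_coeff \<Lambda> w (reflect_angle \<phi>) \<theta> (reflect_angle \<psi>) l m"
proof -
  have sign: "(- 1 :: complex) powi (m - h) = (- 1) powi m * (- 1) powi h" for h
    using power_int_add[of "- 1 :: complex" m "- h"] by (simp add: power_int_minus_one_minus)
  have "repr_coeff \<Lambda> w \<phi> \<theta> \<psi> l (- m) = cis (of_int (- m) * \<phi>) *
      (\<Sum>h\<in>{- int l..int l}. cis (of_int (- h) * \<psi>) * w (l, - h) * of_real (wigner_d \<Lambda> l (- m) (- h) \<theta>))"
    unfolding repr_coeff_def by (subst sum_int_reflect) simp
  also have "\<dots> = cis (of_int (- m) * \<phi>) *
      (\<Sum>h\<in>{- int l..int l}. cis (of_int (- h) * \<psi>) * w (l, h) * of_real ((- 1) powi (m - h) * wigner_d \<Lambda> l m h \<theta>))"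
    using wigner_d_minus[OF lm] sym by (intro arg_cong2[where f = "(*)"] sum.cong refl) simp_all
  also have "\<dots> = repr_coeff \<Lambda> w (reflect_angle \<phi>) \<theta> (reflect_angle \<psi>) l m"
    unfolding repr_coeff_def cis_reflect_angle by (simp add: sign sum_distrib_left mult_ac)
  finally show ?thesis .
qed

lemma Uop_repr:
  assumes w: "w \<in> HS \<Lambda>" and sym: "\<forall>l h. w (l, h) = w (l, - h)"
  shows "Uop (repr \<Lambda> \<phi> \<theta> \<psi> w) = repr \<Lambda> (reflect_angle \<phi>) \<theta> (reflect_angle \<psi>) w"
proof (intro ext, clarify)
  fix l m
  have "(l, - m) \<in> Idx \<Lambda> \<longleftrightarrow> (l, m) \<in> Idx \<Lambda>" by (auto simp: Idx_def)
  then show "Uop (repr \<Lambda> \<phi> \<theta> \<psi> w) (l, m) = repr \<Lambda> (reflect_angle \<phi>) \<theta> (reflect_angle \<psi>) w (l, m)"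
    by (auto simp: Uop_def repr_apply[OF w] Idx_def intro: repr_coeff_minus[OF sym])
qed

theorem theorem3:
  fixes \<Lambda> :: nat and \<omega> :: vec
  assumes omega_in: "\<omega> \<in> HS \<Lambda>"
    and norms: "\<forall>l\<le>\<Lambda>. (\<Sum>h\<in>{- int l..int l}. (cmod (\<omega> (l, h)))\<^sup>2)
                    = (2 * real l + 1) / (real \<Lambda> + 1)\<^sup>2"
  shows "(\<forall>v\<in>HS \<Lambda>. \<forall>i.
            ((\<lambda>(\<phi>, \<theta>, \<psi>). complex_of_real ((real \<Lambda> + 1)\<^sup>2 / (8 * pi\<^sup>2) * sin \<theta>)
                 * (repr \<Lambda> \<phi> \<theta> \<psi> \<omega> i * inprod \<Lambda> (repr \<Lambda> \<phi> \<theta> \<psi> \<omega>) v))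
              has_integral v i) euler_angles)
       \<and> ((\<forall>l h. \<omega> (l, h) = \<omega> (l, - h)) \<longrightarrow>
            (\<forall>(\<phi>, \<theta>, \<psi>)\<in>euler_angles. \<exists>(\<phi>', \<theta>', \<psi>')\<in>euler_angles.
               Uop (repr \<Lambda> \<phi> \<theta> \<psi> \<omega>) = repr \<Lambda> \<phi>' \<theta>' \<psi>' \<omega>))"
proof (intro conjI ballI allI impI)
  fix v i
  assume "v \<in> HS \<Lambda>"
  then show "((\<lambda>(\<phi>, \<theta>, \<psi>). complex_of_real ((real \<Lambda> + 1)\<^sup>2 / (8 * pi\<^sup>2) * sin \<theta>)
      * (repr \<Lambda> \<phi> \<theta> \<psi> \<omega> i * inprod \<Lambda> (repr \<Lambda> \<phi> \<theta> \<psi> \<omega>) v)) has_integral v i) euler_angles"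
    by (rule resolution_of_identity[OF omega_in norms])
next
  fix g
  assume sym: "\<forall>l h. \<omega> (l, h) = \<omega> (l, - h)" and g: "g \<in> euler_angles"
  obtain \<phi> \<theta> \<psi> where g_eq: "g = (\<phi>, \<theta>, \<psi>)" by (cases g)
  have "(reflect_angle \<phi>, \<theta>, reflect_angle \<psi>) \<in> euler_angles"
    using g reflect_angle_range by (auto simp: g_eq euler_angles_def)
  moreover have "Uop (repr \<Lambda> \<phi> \<theta> \<psi> \<omega>) = repr \<Lambda> (reflect_angle \<phi>) \<theta> (reflect_angle \<psi>) \<omega>"
    by (rule Uop_repr[OF omega_in sym])
  ultimately show "case g of (\<phi>, \<theta>, \<psi>) \<Rightarrow>
      \<exists>(\<phi>', \<theta>', \<psi>')\<in>euler_angles. Uop (repr \<Lambda> \<phi> \<theta> \<psi> \<omega>) = repr \<Lambda> \<phi>' \<theta>' \<psi>' \<omega>"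
    unfolding g_eq by auto
qed

end
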